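(* Let $G$ be a planar graph that is a subgraph of some plane triangulation $T$ whose geometric dual $T^*$ admits a $2$-factor consisting of at most two cycles. Then $\chi_1(G) \le 2$.
   Context: All graphs are finite and simple. A mapping $f : V(G) \to E(G) \cup \{\emptyset\}$ is a $1$-selection of $G$ if for every $v \in V(G)$ either $f(v)$ is an edge incident with $v$ or $f(v) = \emptyset$. The graph $G_f$ is obtained from $G$ by deleting all edges in $f(V(G))$. The robust chromatic number is $\chi_1(G) = \min_f \chi(G_f)$ over all $1$-selections $f$ of $G$. A plane triangulation is a simple plane graph in which every face is bounded by a $3$-cycle. The geometric dual $T^*$ of a plane graph $T$ has a vertex for each face of $T$ and, for each edge $e$ of $T$, an edge joining the vertices corresponding to the two faces incident with $e$ (it may be a multigraph). A $2$-factor is a $2$-regular spanning subgraph. *)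

theory Defs
  imports Main
begin

definition simple_graph :: "'a set \<Rightarrow> 'a set set \<Rightarrow> bool" where
  "simple_graph V E \<longleftrightarrow> finite V \<and>
     (\<forall>e\<in>E. \<exists>u v. e = {u, v} \<and> u \<noteq> v \<and> u \<in> V \<and> v \<in> V)"

definition subgraph :: "'a set \<Rightarrow> 'a set set \<Rightarrow> 'a set \<Rightarrow> 'a set set \<Rightarrow> bool" where
  "subgraph VH EH V E \<longleftrightarrow> simple_graph VH EH \<and> VH \<subseteq> V \<and> EH \<subseteq> E"

definition colorable :: "'a set \<Rightarrow> 'a set set \<Rightarrow> nat \<Rightarrow> bool" where
  "colorable V E k \<longleftrightarrow> (\<exists>c :: 'a \<Rightarrow> nat. (\<forall>v\<in>V. c v < k) \<and>
      (\<forall>u v. {u, v} \<in> E \<longrightarrow> u \<noteq> v \<longrightarrow> c u \<noteq> c v))"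

definition chromatic_number :: "'a set \<Rightarrow> 'a set set \<Rightarrow> nat" where
  "chromatic_number V E = (LEAST k. colorable V E k)"

text \<open>1-selections: None plays the role of the empty selection.\<close>
definition one_selection :: "'a set \<Rightarrow> 'a set set \<Rightarrow> ('a \<Rightarrow> 'a set option) \<Rightarrow> bool" where
  "one_selection V E f \<longleftrightarrow>
     (\<forall>v\<in>V. f v = None \<or> (\<exists>e. f v = Some e \<and> e \<in> E \<and> v \<in> e))"

definition selected_removed :: "'a set \<Rightarrow> 'a set set \<Rightarrow> ('a \<Rightarrow> 'a set option) \<Rightarrow> 'a set set" where
  "selected_removed V E f = E - {e. \<exists>v\<in>V. f v = Some e}"

definition robust_chromatic_number :: "'a set \<Rightarrow> 'a set set \<Rightarrow> nat" where
  "robust_chromatic_number V E =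
     (LEAST k. \<exists>f. one_selection V E f \<and> chromatic_number V (selected_removed V E f) = k)"

text \<open>Plane triangulations, represented combinatorially as triangulated 2-spheres:
  a simple connected graph (V,E) with a finite set F of faces, each face f having as
  boundary bd f a triangle of the graph; every edge lies on exactly two faces; the link
  of every vertex is connected (hence a single cycle); and Euler's formula V - E + F = 2
  holds (so the surface is the sphere).\<close>
definition graph_connected :: "'a set \<Rightarrow> 'a set set \<Rightarrow> bool" where
  "graph_connected V E \<longleftrightarrow>
     (\<forall>u\<in>V. \<forall>w\<in>V. (u, w) \<in> {(x, y). {x, y} \<in> E}\<^sup>*)"

definition vertex_link_connected ::
    "'a set set \<Rightarrow> 'f set \<Rightarrow> ('f \<Rightarrow> 'a set) \<Rightarrow> 'a \<Rightarrow> bool" where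
  "vertex_link_connected E F bd v \<longleftrightarrow>
     (\<forall>w u. {v, w} \<in> E \<longrightarrow> {v, u} \<in> E \<longrightarrow>
        (w, u) \<in> {(x, y). \<exists>f\<in>F. bd f = {v, x, y}}\<^sup>*)"

definition plane_triangulation ::
    "'a set \<Rightarrow> 'a set set \<Rightarrow> 'f set \<Rightarrow> ('f \<Rightarrow> 'a set) \<Rightarrow> bool" where
  "plane_triangulation V E F bd \<longleftrightarrow>
     simple_graph V E \<and> card V \<ge> 3 \<and> graph_connected V E \<and> finite F \<and>
     (\<forall>f\<in>F. \<exists>a b c. bd f = {a, b, c} \<and> a \<noteq> b \<and> b \<noteq> c \<and> a \<noteq> c \<and>
                     {a, b} \<in> E \<and> {b, c} \<in> E \<and> {a, c} \<in> E) \<and>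
     (\<forall>e\<in>E. card {f\<in>F. e \<subseteq> bd f} = 2) \<and>
     (\<forall>v\<in>V. vertex_link_connected E F bd v) \<and>
     int (card V) - int (card E) + int (card F) = 2"

text \<open>Geometric dual: vertex set F; each edge e of T gives a dual edge joining the two
  faces whose boundary contains e. A spanning subgraph of T* is given by the set D \<subseteq> E of
  primal edges whose dual edges it uses. It is a 2-factor iff every face meets exactly two
  dual edges of D; its cycles are its connected components.\<close>
definition dual_two_factor ::
    "'a set set \<Rightarrow> 'f set \<Rightarrow> ('f \<Rightarrow> 'a set) \<Rightarrow> 'a set set \<Rightarrow> bool" where
  "dual_two_factor E F bd D \<longleftrightarrow> D \<subseteq> E \<and> (\<forall>f\<in>F. card {e\<in>D. e \<subseteq> bd f} = 2)"

definition dual_adj :: "'f set \<Rightarrow> ('f \<Rightarrow> 'a set) \<Rightarrow> 'a set set \<Rightarrow> ('f \<times> 'f) set" where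
  "dual_adj F bd D = {(f, g). f \<in> F \<and> g \<in> F \<and> f \<noteq> g \<and>
                       (\<exists>e\<in>D. e \<subseteq> bd f \<and> e \<subseteq> bd g)}"

definition num_dual_cycles :: "'f set \<Rightarrow> ('f \<Rightarrow> 'a set) \<Rightarrow> 'a set set \<Rightarrow> nat" where
  "num_dual_cycles F bd D = card (F // ((dual_adj F bd D)\<^sup>* \<inter> (F \<times> F)))"

end

(* Work over GF(2), identifying a set with its indicator vector, so that symdiff is addition.
   Every face of T contains exactly two edges of D, so every face boundary meets D in an even
   number of edges. By Euler's formula the face boundaries span the whole cycle space of T (both
   have dimension |E| - |V| + 1), so every cycle of T meets D evenly: D is an edge cut, and
   colouring a vertex by the parity of the number of D-edges on a path from a fixed root is
   proper on the edges of D.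
   An even subgraph of N = E(G) - D avoids D, so it is the boundary of a set of faces that is a
   union of cycles of the dual 2-factor; with at most two such cycles, N has at most one nonzero
   even subgraph. Hence N is a pseudoforest, and each of its edges can be selected by a distinct
   end vertex. This 1-selection deletes N, and the parity colouring 2-colours what remains. *)

theory Submission
  imports Defs
begin

section \<open>Symmetric difference and boundaries modulo 2\<close>

definition symdiff :: "'a set \<Rightarrow> 'a set \<Rightarrow> 'a set" where
  "symdiff A B = (A - B) \<union> (B - A)"

lemma mem_symdiff: "x \<in> symdiff A B \<longleftrightarrow> (x \<in> A) \<noteq> (x \<in> B)"
  unfolding symdiff_def by auto

lemma symdiff_empty [simp]: "symdiff A {} = A" "symdiff {} A = A"
  and symdiff_self [simp]: "symdiff A A = {}"
  and symdiff_cancel_right [simp]: "symdiff (symdiff A B) B = A"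
  by (auto simp: mem_symdiff)

lemma symdiff_subset: "A \<subseteq> X \<Longrightarrow> B \<subseteq> X \<Longrightarrow> symdiff A B \<subseteq> X"
  by (auto simp: mem_symdiff)

lemma card_symdiff:
  assumes "finite A" "finite B"
  shows "card (symdiff A B) + 2 * card (A \<inter> B) = card A + card B"
proof -
  have "card (symdiff A B) = card (A - B) + card (B - A)"
    unfolding symdiff_def by (rule card_Un_disjoint) (use assms in auto)
  moreover have "card A = card (A \<inter> B) + card (A - B)" "card B = card (A \<inter> B) + card (B - A)"
    using assms card_Int_Diff[of B A] by (simp_all add: card_Int_Diff inf_commute)
  ultimately show ?thesis by linarith
qed

lemma odd_card_symdiff_Int:
  assumes "finite A" "finite B"
  shows "odd (card (symdiff A B \<inter> C)) \<longleftrightarrow> odd (card (A \<inter> C)) \<noteq> odd (card (B \<inter> C))"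
proof -
  have "symdiff A B \<inter> C = symdiff (A \<inter> C) (B \<inter> C)" "A \<inter> C \<inter> (B \<inter> C) = A \<inter> B \<inter> C"
    by (auto simp: mem_symdiff)
  then have "card (symdiff A B \<inter> C) + 2 * card (A \<inter> B \<inter> C) = card (A \<inter> C) + card (B \<inter> C)"
    using card_symdiff[of "A \<inter> C" "B \<inter> C"] assms by simp
  then have "even (card (symdiff A B \<inter> C) + 2 * card (A \<inter> B \<inter> C))
      \<longleftrightarrow> even (card (A \<inter> C) + card (B \<inter> C))" by (rule arg_cong)
  then show ?thesis by simp
qed

definition mod2_boundary :: "('x \<Rightarrow> 'y \<Rightarrow> bool) \<Rightarrow> 'y set \<Rightarrow> 'x set \<Rightarrow> 'y set" where
  "mod2_boundary R Y A = {y\<in>Y. odd (card {x\<in>A. R x y})}"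

lemma mod2_boundary_symdiff:
  assumes "finite A" "finite B"
  shows "mod2_boundary R Y (symdiff A B) = symdiff (mod2_boundary R Y A) (mod2_boundary R Y B)"
proof -
  have parity: "odd (card {x\<in>symdiff A B. R x y}) \<longleftrightarrow>
        odd (card {x\<in>A. R x y}) \<noteq> odd (card {x\<in>B. R x y})" for y
    using odd_card_symdiff_Int[OF assms, of "{x. R x y}"] by (simp only: Int_def mem_Collect_eq)
  show ?thesis
  proof (rule set_eqI)
    fix y
    show "y \<in> mod2_boundary R Y (symdiff A B) \<longleftrightarrow>
        y \<in> symdiff (mod2_boundary R Y A) (mod2_boundary R Y B)"
      unfolding mem_symdiff[of y] mod2_boundary_def mem_Collect_eq using parity[of y] by blast
  qed
qed

lemma mod2_boundary_empty [simp]: "mod2_boundary R Y {} = {}"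
  unfolding mod2_boundary_def by simp

lemma mod2_boundary_subset: "mod2_boundary R Y A \<subseteq> Y"
  unfolding mod2_boundary_def by auto

lemma card_Pow_eq_kernel_mult_image:
  assumes "finite X"
    and hom: "\<And>A B. A \<subseteq> X \<Longrightarrow> B \<subseteq> X \<Longrightarrow> \<phi> (symdiff A B) = symdiff (\<phi> A) (\<phi> B)"
  shows "card (Pow X) = card {A. A \<subseteq> X \<and> \<phi> A = {}} * card (\<phi> ` Pow X)"
proof -
  let ?K = "{A. A \<subseteq> X \<and> \<phi> A = {}}"
  let ?fibre = "\<lambda>y. {A. A \<subseteq> X \<and> \<phi> A = y}"
  have card_fibre: "card (?fibre y) = card ?K" if y: "y \<in> \<phi> ` Pow X" for y
  proof -
    obtain A0 where A0: "A0 \<subseteq> X" "y = \<phi> A0" using y by auto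
    have "\<phi> (symdiff Z A0) = symdiff (\<phi> Z) y" "symdiff Z A0 \<subseteq> X" if "Z \<subseteq> X" for Z
      using hom[OF that A0(1)] A0 that by (auto simp: mem_symdiff)
    then have "bij_betw (\<lambda>Z. symdiff Z A0) ?K (?fibre y)"
      by (intro bij_betw_byWitness[where f' = "\<lambda>Z. symdiff Z A0"]) (auto simp: A0)
    then show ?thesis by (simp add: bij_betw_same_card)
  qed
  have "card (Pow X) = card (\<Union>y\<in>\<phi> ` Pow X. ?fibre y)"
    by (rule arg_cong[where f = card]) auto
  also have "\<dots> = (\<Sum>y\<in>\<phi> ` Pow X. card (?fibre y))"
    by (rule card_UN_disjoint) (use assms(1) in auto)
  also have "\<dots> = (\<Sum>y\<in>\<phi> ` Pow X. card ?K)" using card_fibre by simp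
  finally show ?thesis by simp
qed

lemma card_even_subsets:
  assumes "finite W" "W \<noteq> {}"
  shows "card {A. A \<subseteq> W \<and> even (card A)} = 2 ^ (card W - 1)"
proof -
  obtain w where w: "w \<in> W" using assms by auto
  let ?E = "{A. A \<subseteq> W \<and> even (card A)}" and ?O = "{A. A \<subseteq> W \<and> odd (card A)}"
  have flip: "odd (card (symdiff A {w})) \<longleftrightarrow> even (card A)" "symdiff A {w} \<subseteq> W"
    if "A \<subseteq> W" for A
    using odd_card_symdiff_Int[of A "{w}" UNIV] finite_subset[OF that assms(1)] that w
    by (auto simp: mem_symdiff)
  have "symdiff A {w} \<in> ?O" if "A \<in> ?E" for A using flip[of A] that by simp
  moreover have "symdiff A {w} \<in> ?E" if "A \<in> ?O" for A using flip[of A] that by simp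
  ultimately have "bij_betw (\<lambda>A. symdiff A {w}) ?E ?O"
    by (intro bij_betw_byWitness[where f' = "\<lambda>A. symdiff A {w}"]) auto
  then have "card ?E = card ?O" by (rule bij_betw_same_card)
  moreover have "card ?E + card ?O = 2 ^ card W"
  proof -
    have "finite ?E" "finite ?O" by (rule finite_subset[of _ "Pow W"], use assms(1) in auto)+
    moreover have "Pow W = ?E \<union> ?O" by auto
    ultimately have "card (Pow W) = card ?E + card ?O"
      using card_Un_disjoint[of ?E ?O] by auto
    then show ?thesis using assms(1) by (simp add: card_Pow)
  qed
  moreover have "(2::nat) ^ card W = 2 * 2 ^ (card W - 1)"
    using assms by (simp add: card_gt_0_iff power_eq_if)
  ultimately show ?thesis by simp
qed

section \<open>Even subgraphs and pseudoforests\<close>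

definition even_subgraphs :: "'a set set \<Rightarrow> 'a set set set" where
  "even_subgraphs N = {X. X \<subseteq> N \<and> (\<forall>v. even (card {e\<in>X. v \<in> e}))}"

definition covering_selection :: "'a set set \<Rightarrow> ('a \<Rightarrow> 'a set option) \<Rightarrow> bool" where
  "covering_selection N f \<longleftrightarrow>
     (\<forall>v. f v = None \<or> (\<exists>e\<in>N. f v = Some e \<and> v \<in> e)) \<and> (\<forall>e\<in>N. \<exists>v. f v = Some e)"

lemma sum_degree:
  assumes "finite X" "\<forall>e\<in>X. card e = 2" "finite W" "\<Union>X \<subseteq> W"
  shows "(\<Sum>v\<in>W. card {e\<in>X. v \<in> e}) = 2 * card X"
proof (rule sum_multicount)
  show "\<forall>e\<in>X. card {v\<in>W. v \<in> e} = 2"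
  proof
    fix e assume "e \<in> X"
    then have "{v\<in>W. v \<in> e} = e" using assms(4) by blast
    then show "card {v\<in>W. v \<in> e} = 2" using \<open>e \<in> X\<close> assms(2) by simp
  qed
qed (use assms in auto)

lemma finite_Union_two_element_sets:
  assumes "finite N" "\<forall>e\<in>N. card e = 2"
  shows "finite (\<Union>N)"
  using assms by (metis card.infinite finite_Union zero_neq_numeral)

lemma even_card_odd_degree_vertices:
  assumes "finite X" "\<forall>e\<in>X. card e = 2" "finite W" "\<Union>X \<subseteq> W"
  shows "even (card (mod2_boundary (\<lambda>e v. v \<in> e) W X))"
proof -
  have "even (\<Sum>v\<in>W. card {e\<in>X. v \<in> e})" using sum_degree[OF assms] by simp
  moreover have "even (\<Sum>v\<in>W. card {e\<in>X. v \<in> e}) \<longleftrightarrow>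
      even (card {v\<in>W. odd (card {e\<in>X. v \<in> e})})" by (rule even_sum_iff[OF assms(3)])
  ultimately show ?thesis unfolding mod2_boundary_def by simp
qed

lemma mod2_boundary_image_even:
  assumes "finite N" "\<forall>e\<in>N. card e = 2" "finite W" "\<Union>N \<subseteq> W"
  shows "mod2_boundary (\<lambda>e v. v \<in> e) W ` Pow N \<subseteq> {B. B \<subseteq> W \<and> even (card B)}"
proof
  fix B assume "B \<in> mod2_boundary (\<lambda>e v. v \<in> e) W ` Pow N"
  then obtain A where A: "A \<subseteq> N" "B = mod2_boundary (\<lambda>e v. v \<in> e) W A" by auto
  have "even (card B)" unfolding A(2)
    by (rule even_card_odd_degree_vertices) (use A assms in \<open>auto intro: finite_subset\<close>)
  then show "B \<in> {B. B \<subseteq> W \<and> even (card B)}" using A(2) mod2_boundary_subset[of _ W A] by simp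
qed

lemma even_subgraphs_eq_kernel:
  assumes "\<Union>N \<subseteq> W"
  shows "even_subgraphs N = {A. A \<subseteq> N \<and> mod2_boundary (\<lambda>e v. v \<in> e) W A = {}}"
  unfolding even_subgraphs_def
proof (rule Collect_cong)
  fix A
  have "mod2_boundary (\<lambda>e v. v \<in> e) W A = {} \<longleftrightarrow> (\<forall>v. even (card {e\<in>A. v \<in> e}))"
    if "A \<subseteq> N"
  proof
    assume "mod2_boundary (\<lambda>e v. v \<in> e) W A = {}"
    then have "even (card {e\<in>A. v \<in> e})" if "v \<in> W" for v
      using that unfolding mod2_boundary_def by blast
    moreover have "{e\<in>A. v \<in> e} = {}" if "v \<notin> W" for v using that \<open>A \<subseteq> N\<close> assms by blast
    ultimately show "\<forall>v. even (card {e\<in>A. v \<in> e})" by (metis card.empty even_zero)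
  qed (simp add: mod2_boundary_def)
  then show "A \<subseteq> N \<and> (\<forall>v. even (card {e\<in>A. v \<in> e})) \<longleftrightarrow>
      A \<subseteq> N \<and> mod2_boundary (\<lambda>e v. v \<in> e) W A = {}"
    by blast
qed

lemma card_even_subgraphs_lower_bound:
  assumes fin: "finite N" and two: "\<forall>e\<in>N. card e = 2" and "N \<noteq> {}"
  shows "2 ^ card N \<le> card (even_subgraphs N) * 2 ^ (card (\<Union>N) - 1)"
proof -
  let ?W = "\<Union>N"
  let ?\<phi> = "mod2_boundary (\<lambda>e v. v \<in> e) ?W"
  have finW: "finite ?W" using finite_Union_two_element_sets[OF fin two] .
  have "?W \<noteq> {}" using \<open>N \<noteq> {}\<close> two by fastforce
  have "card (Pow N) = card {A. A \<subseteq> N \<and> ?\<phi> A = {}} * card (?\<phi> ` Pow N)"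
    by (rule card_Pow_eq_kernel_mult_image[OF fin])
      (meson fin finite_subset mod2_boundary_symdiff)
  moreover have "{A. A \<subseteq> N \<and> ?\<phi> A = {}} = even_subgraphs N"
    by (rule even_subgraphs_eq_kernel[symmetric]) simp
  moreover have "?\<phi> ` Pow N \<subseteq> {B. B \<subseteq> ?W \<and> even (card B)}"
    using mod2_boundary_image_even[OF fin two finW] by simp
  then have "card (?\<phi> ` Pow N) \<le> 2 ^ (card ?W - 1)"
    using card_mono[of "{B. B \<subseteq> ?W \<and> even (card B)}"] card_even_subsets[OF finW \<open>?W \<noteq> {}\<close>] finW
    by fastforce
  ultimately show ?thesis using fin by (simp add: card_Pow)
qed

lemma even_subgraphs_mono: "M \<subseteq> N \<Longrightarrow> even_subgraphs M \<subseteq> even_subgraphs N"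
  unfolding even_subgraphs_def by auto

lemma empty_in_even_subgraphs: "{} \<in> even_subgraphs N"
  unfolding even_subgraphs_def by simp

(* Otherwise every vertex other than r has degree at least 2, so N has at least as many edges as
   vertices, against card_even_subgraphs_lower_bound. *)
lemma leaf_of_acyclic:
  assumes fin: "finite N" and two: "\<forall>e\<in>N. card e = 2" and "N \<noteq> {}"
    and acyclic: "even_subgraphs N = {{}}"
  shows "\<exists>v e. v \<noteq> r \<and> {e'\<in>N. v \<in> e'} = {e}"
proof (rule ccontr)
  assume no_leaf: "\<not> ?thesis"
  let ?W = "\<Union>N" and ?deg = "\<lambda>v. card {e\<in>N. v \<in> e}"
  have finW: "finite ?W" using finite_Union_two_element_sets[OF fin two] .
  have "?W \<noteq> {}" using \<open>N \<noteq> {}\<close> two by fastforce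
  have "2 \<le> ?deg v + (if v = r then 1 else 0)" if "v \<in> ?W" for v
  proof -
    have "{e\<in>N. v \<in> e} \<noteq> {}" using that by auto
    then have "?deg v \<noteq> 0" using fin by simp
    moreover have "?deg v \<noteq> 1" if "v \<noteq> r"
    proof
      assume "?deg v = 1"
      then obtain e where "{e\<in>N. v \<in> e} = {e}" by (rule card_1_singletonE)
      then show False using no_leaf that by blast
    qed
    ultimately show ?thesis by auto
  qed
  then have "(\<Sum>v\<in>?W. 2) \<le> (\<Sum>v\<in>?W. ?deg v + (if v = r then 1 else 0))"
    by (rule sum_mono)
  also have "\<dots> = (\<Sum>v\<in>?W. ?deg v) + (\<Sum>v\<in>?W. if v = r then 1 else 0)"
    by (rule sum.distrib)
  also have "(\<Sum>v\<in>?W. if v = r then 1 else 0) \<le> (1::nat)" using finW by simp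
  finally have "2 * card ?W \<le> 2 * card N + 1" using sum_degree[OF fin two finW] by simp
  moreover have "(2::nat) ^ card N \<le> 2 ^ (card ?W - 1)"
    using card_even_subgraphs_lower_bound[OF fin two \<open>N \<noteq> {}\<close>] acyclic by simp
  then have "card N \<le> card ?W - 1" by simp
  moreover have "card ?W \<noteq> 0" using finW \<open>?W \<noteq> {}\<close> by simp
  ultimately show False by linarith
qed

lemma covering_selection_insert:
  assumes f: "covering_selection N f" and "f v = None" "v \<in> e"
  shows "covering_selection (insert e N) (f(v := Some e))"
  unfolding covering_selection_def
proof (intro conjI allI ballI)
  fix w
  show "(f(v := Some e)) w = None \<or> (\<exists>e'\<in>insert e N. (f(v := Some e)) w = Some e' \<and> w \<in> e')"
    using f \<open>v \<in> e\<close> unfolding covering_selection_def by (cases "w = v") (simp, simp, blast)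
next
  fix e' assume "e' \<in> insert e N"
  show "\<exists>w. (f(v := Some e)) w = Some e'"
  proof (cases "e' = e")
    case False
    then obtain w where "f w = Some e'" using f \<open>e' \<in> insert e N\<close> unfolding covering_selection_def by blast
    moreover have "w \<noteq> v" using calculation \<open>f v = None\<close> by auto
    ultimately show ?thesis by auto
  qed auto
qed

lemma acyclic_covering_selection:
  assumes "finite N" "\<forall>e\<in>N. card e = 2" "even_subgraphs N = {{}}"
  shows "\<exists>f. covering_selection N f \<and> f r = None"
  using assms
proof (induction N rule: finite_psubset_induct)
  case (psubset N)
  show ?case
  proof (cases "N = {}")
    case True
    then show ?thesis by (intro exI[of _ "\<lambda>_. None"]) (simp add: covering_selection_def)
  next
    case False
    obtain v e where leaf: "v \<noteq> r" "{e'\<in>N. v \<in> e'} = {e}"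
      using leaf_of_acyclic[OF psubset.hyps(1) psubset.prems(1) False psubset.prems(2)] by blast
    then have "e \<in> N" "v \<in> e" by auto
    have "even_subgraphs (N - {e}) = {{}}"
      using even_subgraphs_mono[of "N - {e}" N] empty_in_even_subgraphs psubset.prems(2) by blast
    then obtain f where f: "covering_selection (N - {e}) f" "f r = None"
      using psubset.IH[of "N - {e}"] \<open>e \<in> N\<close> psubset.prems(1) by blast
    have "\<forall>e'\<in>N - {e}. v \<notin> e'" using leaf(2) by blast
    then have "f v = None" using f(1) unfolding covering_selection_def by blast
    then have "covering_selection N (f(v := Some e))"
      using covering_selection_insert[OF f(1) _ \<open>v \<in> e\<close>] \<open>e \<in> N\<close> by (simp add: insert_absorb)
    then show ?thesis using f(2) leaf(1) by auto
  qed
qed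

(* The only nonzero even subgraph C is a cycle: remove an edge e of C, select in the remaining
   forest away from an end a of e, and let a select e. *)
lemma covering_selection_exists:
  assumes fin: "finite N" and two: "\<forall>e\<in>N. card e = 2" and "card (even_subgraphs N) \<le> 2"
  shows "\<exists>f. covering_selection N f"
proof (cases "even_subgraphs N = {{}}")
  case True
  then show ?thesis using acyclic_covering_selection[OF fin two] by blast
next
  case False
  then obtain C where C: "C \<in> even_subgraphs N" "C \<noteq> {}" using empty_in_even_subgraphs by blast
  then obtain e where "e \<in> C" by blast
  then have "e \<in> N" using C(1) unfolding even_subgraphs_def by blast
  then obtain a where "a \<in> e" using two by fastforce
  have "finite (even_subgraphs N)" using fin unfolding even_subgraphs_def by simp
  moreover have "{{}, C} \<subseteq> even_subgraphs N" using C empty_in_even_subgraphs by blast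
  moreover have "card (even_subgraphs N) \<le> card {{}, C}" using assms(3) C(2) by simp
  ultimately have "even_subgraphs N = {{}, C}" by (metis card_seteq)
  moreover have "C \<notin> even_subgraphs (N - {e})" using \<open>e \<in> C\<close> unfolding even_subgraphs_def by blast
  ultimately have "even_subgraphs (N - {e}) = {{}}"
    using even_subgraphs_mono[of "N - {e}" N] empty_in_even_subgraphs by blast
  then obtain f where "covering_selection (N - {e}) f" "f a = None"
    using acyclic_covering_selection[of "N - {e}" a] fin two by blast
  then have "covering_selection N (f(a := Some e))"
    using covering_selection_insert[of "N - {e}" f a e] \<open>a \<in> e\<close> \<open>e \<in> N\<close>
    by (simp add: insert_absorb)
  then show ?thesis by blast
qed

section \<open>The cycle space of a plane triangulation\<close>

locale triangulation =
  fixes V :: "'a set" and E :: "'a set set" and F :: "'f set" and bd :: "'f \<Rightarrow> 'a set"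
  assumes plane_triangulation: "plane_triangulation V E F bd"
begin

lemma
  shows finite_V: "finite V"
    and card_V: "3 \<le> card V"
    and connected: "graph_connected V E"
    and finite_F: "finite F"
    and euler: "int (card V) - int (card E) + int (card F) = 2"
  using plane_triangulation unfolding plane_triangulation_def simple_graph_def by simp_all

lemma edge_doubleton: "e \<in> E \<Longrightarrow> \<exists>u v. e = {u, v} \<and> u \<noteq> v \<and> u \<in> V \<and> v \<in> V"
  using plane_triangulation unfolding plane_triangulation_def simple_graph_def by blast

lemma face_triangle:
  "f \<in> F \<Longrightarrow> \<exists>a b c. bd f = {a, b, c} \<and> a \<noteq> b \<and> b \<noteq> c \<and> a \<noteq> c \<and>
     {a, b} \<in> E \<and> {b, c} \<in> E \<and> {a, c} \<in> E"
  using plane_triangulation unfolding plane_triangulation_def by blast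

lemma card_faces_at_edge: "e \<in> E \<Longrightarrow> card {f\<in>F. e \<subseteq> bd f} = 2"
  using plane_triangulation unfolding plane_triangulation_def by blast

lemma link_connected: "v \<in> V \<Longrightarrow> vertex_link_connected E F bd v"
  using plane_triangulation unfolding plane_triangulation_def by blast

lemma card_edge: "e \<in> E \<Longrightarrow> card e = 2"
  using edge_doubleton by fastforce

lemma edge_subset: "e \<in> E \<Longrightarrow> e \<subseteq> V"
  using edge_doubleton by blast

lemma finite_E: "finite E"
  using finite_subset[of E "Pow V"] edge_subset finite_V by blast

lemma edge_in_face:
  assumes "f \<in> F" "p \<in> bd f" "q \<in> bd f" "p \<noteq> q"
  shows "{p, q} \<in> E"
proof -
  obtain a b c where "bd f = {a, b, c}" "{a, b} \<in> E" "{b, c} \<in> E" "{a, c} \<in> E"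
    using face_triangle[OF assms(1)] by blast
  then show ?thesis using assms(2-4) by (auto simp: insert_commute)
qed

lemma face_subset: "f \<in> F \<Longrightarrow> bd f \<subseteq> V"
  using face_triangle edge_subset by blast

lemma card_face: "f \<in> F \<Longrightarrow> card (bd f) = 3"
  using face_triangle by fastforce

lemma face_nonempty: "f \<in> F \<Longrightarrow> bd f \<noteq> {}"
  using card_face by fastforce

lemma face_at_vertex:
  assumes "f \<in> F" "v \<in> bd f"
  obtains x y where "bd f = {v, x, y}" "v \<noteq> x" "v \<noteq> y" "x \<noteq> y"
proof -
  obtain a b c where abc: "bd f = {a, b, c}" "a \<noteq> b" "b \<noteq> c" "a \<noteq> c"
    using face_triangle[OF assms(1)] by blast
  then consider "v = a" | "v = b" | "v = c" using assms(2) by blast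
  then show ?thesis using abc that by cases (auto simp: insert_commute)
qed

abbreviation vertex_boundary :: "'a set set \<Rightarrow> 'a set" where
  "vertex_boundary X \<equiv> mod2_boundary (\<lambda>e v. v \<in> e) V X"

abbreviation face_boundary :: "'f set \<Rightarrow> 'a set set" where
  "face_boundary S \<equiv> mod2_boundary (\<lambda>f e. e \<subseteq> bd f) E S"

lemma cycle_space_eq_kernel:
  "even_subgraphs E = {X. X \<subseteq> E \<and> vertex_boundary X = {}}"
  by (rule even_subgraphs_eq_kernel) (use edge_subset in blast)

lemma vertex_boundary_symdiff:
  "X \<subseteq> E \<Longrightarrow> Y \<subseteq> E \<Longrightarrow> vertex_boundary (symdiff X Y) = symdiff (vertex_boundary X) (vertex_boundary Y)"
  by (rule mod2_boundary_symdiff) (use finite_subset finite_E in blast)+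

lemma vertex_boundary_edge: "e \<in> E \<Longrightarrow> vertex_boundary {e} = e"
  using edge_subset[of e] unfolding mod2_boundary_def by (auto simp: Collect_conv_if)

lemma vertex_boundary_walk:
  assumes "(u, w) \<in> {(x, y). {x, y} \<in> E}\<^sup>*"
  shows "\<exists>X\<subseteq>E. vertex_boundary X = symdiff {u} {w}"
  using assms
proof (induction rule: rtrancl_induct)
  case base
  show ?case by (intro exI[of _ "{}"]) simp
next
  case (step x y)
  then obtain X where X: "X \<subseteq> E" "vertex_boundary X = symdiff {u} {x}" by blast
  have xy: "{x, y} \<in> E" using step.hyps(2) by simp
  then have "x \<noteq> y" using card_edge by fastforce
  have "vertex_boundary (symdiff X {{x, y}}) = symdiff (symdiff {u} {x}) {x, y}"
    using vertex_boundary_symdiff[of X "{{x, y}}"] X xy vertex_boundary_edge[OF xy] by simp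
  also have "\<dots> = symdiff {u} {y}" using \<open>x \<noteq> y\<close> by (auto simp: mem_symdiff)
  finally show ?case using symdiff_subset[of X E "{{x, y}}"] X xy by blast
qed

lemma vertex_boundary_path:
  "u \<in> V \<Longrightarrow> w \<in> V \<Longrightarrow> \<exists>X\<subseteq>E. vertex_boundary X = symdiff {u} {w}"
  using connected vertex_boundary_walk unfolding graph_connected_def by blast

lemma even_subset_is_vertex_boundary:
  assumes "A \<subseteq> V" "even (card A)"
  shows "\<exists>X\<subseteq>E. vertex_boundary X = A"
  using assms
proof (induction "card A" arbitrary: A rule: less_induct)
  case less
  show ?case
  proof (cases "A = {}")
    case True
    then show ?thesis by (intro exI[of _ "{}"]) simp
  next
    case False
    have "finite A" using finite_subset[OF less.prems(1) finite_V] .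
    obtain a where "a \<in> A" using False by blast
    moreover have "A \<noteq> {a}" using less.prems(2) by auto
    ultimately obtain b where ab: "a \<in> A" "b \<in> A" "a \<noteq> b" by blast
    let ?A = "A - {a, b}"
    have "card {a, b} \<le> card A" using ab \<open>finite A\<close> by (intro card_mono) auto
    then have "card A \<ge> 2" using ab(3) by simp
    moreover have "card ?A = card A - 2" using ab \<open>finite A\<close> by (simp add: card_Diff_subset)
    ultimately have smaller: "card ?A < card A" and even: "even (card ?A)"
      using less.prems(2) by simp_all
    have "?A \<subseteq> V" using less.prems(1) by blast
    then obtain X1 where X1: "X1 \<subseteq> E" "vertex_boundary X1 = ?A"
      using less.hyps[OF smaller _ even] by blast
    have "a \<in> V" "b \<in> V" using ab less.prems(1) by auto
    then obtain X2 where X2: "X2 \<subseteq> E" "vertex_boundary X2 = symdiff {a} {b}"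
      using vertex_boundary_path[of a b] by blast
    have "vertex_boundary (symdiff X1 X2) = symdiff ?A (symdiff {a} {b})"
      using vertex_boundary_symdiff X1 X2 by simp
    also have "\<dots> = A" using ab by (auto simp: mem_symdiff)
    finally show ?thesis using symdiff_subset[OF X1(1) X2(1)] by (intro exI[of _ "symdiff X1 X2"]) simp
  qed
qed

lemma card_cycle_space: "card (even_subgraphs E) * 2 ^ (card V - 1) = 2 ^ card E"
proof -
  have "card (Pow E) = card (even_subgraphs E) * card (vertex_boundary ` Pow E)"
    unfolding cycle_space_eq_kernel
    by (rule card_Pow_eq_kernel_mult_image[OF finite_E]) (simp add: vertex_boundary_symdiff)
  moreover have "vertex_boundary ` Pow E = {A. A \<subseteq> V \<and> even (card A)}"
  proof
    show "vertex_boundary ` Pow E \<subseteq> {A. A \<subseteq> V \<and> even (card A)}"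
      by (rule mod2_boundary_image_even[OF finite_E _ finite_V]) (use card_edge edge_subset in blast)+
    show "{A. A \<subseteq> V \<and> even (card A)} \<subseteq> vertex_boundary ` Pow E"
      using even_subset_is_vertex_boundary by blast
  qed
  moreover have "V \<noteq> {}" using card_V by auto
  ultimately show ?thesis using card_even_subsets[OF finite_V] finite_E by (simp add: card_Pow)
qed

lemma face_boundary_symdiff:
  "S \<subseteq> F \<Longrightarrow> S' \<subseteq> F \<Longrightarrow> face_boundary (symdiff S S') = symdiff (face_boundary S) (face_boundary S')"
  by (rule mod2_boundary_symdiff) (use finite_subset finite_F in blast)+

lemma face_boundary_insert:
  assumes "f \<in> F" "S \<subseteq> F" "f \<notin> S"
  shows "face_boundary (insert f S) = symdiff (face_boundary S) (face_boundary {f})"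
proof -
  have "insert f S = symdiff S {f}" using assms(3) by (auto simp: mem_symdiff)
  then show ?thesis using face_boundary_symdiff[of S "{f}"] assms(1,2) by simp
qed

lemma face_boundary_faces: "face_boundary F = {}"
  unfolding mod2_boundary_def using card_faces_at_edge by simp

lemma face_boundary_singleton: "face_boundary {f} = {e\<in>E. e \<subseteq> bd f}"
  unfolding mod2_boundary_def by (auto simp: Collect_conv_if)

lemma face_boundary_complement:
  assumes "S \<subseteq> F"
  shows "face_boundary (F - S) = face_boundary S"
proof -
  have "F - S = symdiff F S" using assms by (auto simp: mem_symdiff)
  then show ?thesis using face_boundary_symdiff[of F S] assms face_boundary_faces by simp
qed

lemma vertex_boundary_face_boundary_singleton:
  assumes "f \<in> F"
  shows "vertex_boundary (face_boundary {f}) = {}"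
proof -
  obtain a b c where abc: "bd f = {a, b, c}" "a \<noteq> b" "b \<noteq> c" "a \<noteq> c"
    and edges: "{a, b} \<in> E" "{b, c} \<in> E" "{a, c} \<in> E"
    using face_triangle[OF assms] by blast
  have "face_boundary {f} = {{a, b}, {b, c}, {a, c}}"
    unfolding face_boundary_singleton abc(1)
  proof (intro equalityI subsetI)
    fix e assume e: "e \<in> {e\<in>E. e \<subseteq> {a, b, c}}"
    then obtain u v where "e = {u, v}" "u \<noteq> v" "u \<in> {a, b, c}" "v \<in> {a, b, c}"
      using edge_doubleton[of e] by auto
    then show "e \<in> {{a, b}, {b, c}, {a, c}}" by (auto simp: insert_commute)
  qed (use edges in auto)
  also have "\<dots> = symdiff (symdiff {{a, b}} {{b, c}}) {{a, c}}"
    using abc(2-4) by (auto simp: mem_symdiff doubleton_eq_iff)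
  finally have "vertex_boundary (face_boundary {f}) = symdiff (symdiff {a, b} {b, c}) {a, c}"
    using edges vertex_boundary_symdiff vertex_boundary_edge by (simp add: symdiff_subset)
  also have "\<dots> = {}" using abc(2-4) by (auto simp: mem_symdiff)
  finally show ?thesis .
qed

lemma face_boundary_in_cycle_space:
  assumes "S \<subseteq> F"
  shows "face_boundary S \<in> even_subgraphs E"
proof -
  have "finite S" using finite_subset[OF assms finite_F] .
  then show ?thesis using assms
  proof (induction S rule: finite_induct)
    case empty
    then show ?case by (simp add: cycle_space_eq_kernel)
  next
    case (insert f S)
    have eq: "face_boundary (insert f S) = symdiff (face_boundary S) (face_boundary {f})"
      by (rule face_boundary_insert) (use insert in auto)
    have sub: "face_boundary S \<subseteq> E" "face_boundary {f} \<subseteq> E"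
      by (rule mod2_boundary_subset)+
    have "vertex_boundary (face_boundary S) = {}"
      using insert.IH insert.prems by (simp add: cycle_space_eq_kernel)
    moreover have "vertex_boundary (face_boundary {f}) = {}"
      using vertex_boundary_face_boundary_singleton insert.prems by simp
    ultimately have "vertex_boundary (face_boundary (insert f S)) = {}"
      unfolding eq vertex_boundary_symdiff[OF sub] by simp
    then show ?case
      unfolding cycle_space_eq_kernel using eq symdiff_subset[OF sub] by simp
  qed
qed

lemma face_set_closed_across_edge:
  assumes S: "S \<subseteq> F" and e: "e \<in> E" "e \<notin> face_boundary S"
    and f: "f \<in> S" "e \<subseteq> bd f" and g: "g \<in> F" "e \<subseteq> bd g"
  shows "g \<in> S"
proof (rule ccontr)
  assume "g \<notin> S"
  then have "{h\<in>S. e \<subseteq> bd h} \<subset> {h\<in>F. e \<subseteq> bd h}" using S g by blast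
  then have "card {h\<in>S. e \<subseteq> bd h} < 2"
    using psubset_card_mono[of "{h\<in>F. e \<subseteq> bd h}"] card_faces_at_edge[OF e(1)] finite_F by simp
  moreover have "card {h\<in>S. e \<subseteq> bd h} \<noteq> 0"
    using f finite_subset[OF S finite_F] by auto
  moreover have "even (card {h\<in>S. e \<subseteq> bd h})" using e unfolding mod2_boundary_def by blast
  ultimately show False by presburger
qed

(* Walk around the link of v, crossing one edge {v, z'} at a time. *)
lemma face_set_closed_around_vertex:
  assumes S: "S \<subseteq> F" "face_boundary S = {}" and f: "f \<in> S" "v \<in> bd f"
    and g: "g \<in> F" "v \<in> bd g"
  shows "g \<in> S"
proof -
  have "f \<in> F" using f S by blast
  obtain x y where "bd f = {v, x, y}" "v \<noteq> x" using face_at_vertex[OF \<open>f \<in> F\<close> f(2)] by metis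
  then have vx: "{v, x} \<in> E" using edge_in_face[OF \<open>f \<in> F\<close>] by simp
  obtain c d where cd: "bd g = {v, c, d}" "v \<noteq> c" using face_at_vertex[OF g] by metis
  then have vc: "{v, c} \<in> E" using edge_in_face[OF g(1)] by simp
  have "v \<in> V" using face_subset[OF \<open>f \<in> F\<close>] f(2) by blast
  then have "(x, c) \<in> {(p, q). \<exists>h\<in>F. bd h = {v, p, q}}\<^sup>*"
    using link_connected vx vc unfolding vertex_link_connected_def by blast
  then have "{v, c} \<in> E \<and> (\<forall>h\<in>F. {v, c} \<subseteq> bd h \<longrightarrow> h \<in> S)"
  proof (induction rule: rtrancl_induct)
    case base
    have "h \<in> S" if "h \<in> F" "{v, x} \<subseteq> bd h" for h
      by (rule face_set_closed_across_edge[OF S(1) vx _ f(1) _ that]) (use S(2) \<open>bd f = _\<close> in auto)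
    then show ?case using vx by blast
  next
    case (step z z')
    then obtain h0 where h0: "h0 \<in> F" "bd h0 = {v, z, z'}" by blast
    then have "h0 \<in> S" using step.IH by auto
    have "v \<noteq> z'"
    proof
      assume "v = z'"
      then have "card (bd h0) \<le> 2" using h0(2) by (simp add: card_insert_le_m1 card_insert_if)
      then show False using card_face[OF h0(1)] by simp
    qed
    then have vz': "{v, z'} \<in> E" using edge_in_face[OF h0(1)] h0(2) by simp
    have "h \<in> S" if "h \<in> F" "{v, z'} \<subseteq> bd h" for h
      by (rule face_set_closed_across_edge[OF S(1) vz' _ \<open>h0 \<in> S\<close> _ that]) (use S(2) h0 in auto)
    then show ?case using vz' by blast
  qed
  then show ?thesis using g cd by auto
qed

lemma face_set_covers_vertices:
  assumes S: "S \<subseteq> F" "face_boundary S = {}" "S \<noteq> {}" and "w \<in> V"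
  shows "\<exists>f\<in>S. w \<in> bd f"
proof -
  obtain f0 v0 where f0: "f0 \<in> S" "v0 \<in> bd f0" using S(1,3) face_nonempty by blast
  then have "v0 \<in> V" using face_subset S(1) by blast
  then have "(v0, w) \<in> {(x, y). {x, y} \<in> E}\<^sup>*"
    using connected \<open>w \<in> V\<close> unfolding graph_connected_def by blast
  then show ?thesis
  proof (induction rule: rtrancl_induct)
    case base
    then show ?case using f0 by blast
  next
    case (step z z')
    then have zz': "{z, z'} \<in> E" by simp
    obtain f where f: "f \<in> S" "z \<in> bd f" using step.IH by blast
    have "{h\<in>F. {z, z'} \<subseteq> bd h} \<noteq> {}"
      using card_faces_at_edge[OF zz'] by (metis card.empty zero_neq_numeral)
    then obtain g where g: "g \<in> F" "{z, z'} \<subseteq> bd g" by blast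
    then have "g \<in> S" using face_set_closed_around_vertex[OF S(1,2) f] by blast
    then show ?case using g by blast
  qed
qed

lemma face_boundary_eq_empty_iff:
  assumes S: "S \<subseteq> F"
  shows "face_boundary S = {} \<longleftrightarrow> S = {} \<or> S = F"
proof
  assume empty: "face_boundary S = {}"
  show "S = {} \<or> S = F"
  proof (cases "S = {}")
    case False
    have "g \<in> S" if "g \<in> F" for g
    proof -
      obtain v where "v \<in> bd g" using face_nonempty[OF \<open>g \<in> F\<close>] by blast
      then obtain f where "f \<in> S" "v \<in> bd f"
        using face_set_covers_vertices[OF S empty False] face_subset \<open>g \<in> F\<close> by blast
      then show "g \<in> S" using face_set_closed_around_vertex[OF S empty] \<open>g \<in> F\<close> \<open>v \<in> bd g\<close> by blast
    qed
    then show ?thesis using S by blast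
  qed simp
next
  assume "S = {} \<or> S = F"
  then show "face_boundary S = {}" by (elim disjE) (simp_all add: face_boundary_faces)
qed

lemma faces_nonempty: "F \<noteq> {}"
proof -
  obtain u w where "u \<in> V" "w \<in> V" "u \<noteq> w"
    using card_le_Suc0_iff_eq[OF finite_V] card_V by auto
  then have "(u, w) \<in> {(x, y). {x, y} \<in> E}\<^sup>+"
    using connected unfolding graph_connected_def by (auto simp: rtrancl_eq_or_trancl)
  then obtain y where "{u, y} \<in> E" by (auto elim: converse_tranclE)
  then show ?thesis using card_faces_at_edge by force
qed

lemma card_face_boundaries: "card (face_boundary ` Pow F) * 2 = 2 ^ card F"
proof -
  have "card (Pow F) = card {S. S \<subseteq> F \<and> face_boundary S = {}} * card (face_boundary ` Pow F)"
    by (rule card_Pow_eq_kernel_mult_image[OF finite_F]) (simp add: face_boundary_symdiff)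
  moreover have "{S. S \<subseteq> F \<and> face_boundary S = {}} = {{}, F}"
    using face_boundary_eq_empty_iff by auto
  ultimately show ?thesis using faces_nonempty finite_F by (simp add: card_Pow)
qed

(* Both spaces have dimension |E| - |V| + 1 by Euler's formula. *)
theorem cycle_space_eq_face_boundaries: "even_subgraphs E = face_boundary ` Pow F"
proof -
  have "face_boundary ` Pow F \<subseteq> even_subgraphs E" using face_boundary_in_cycle_space by blast
  moreover have "finite (even_subgraphs E)" using finite_E unfolding even_subgraphs_def by simp
  moreover have "card (even_subgraphs E) \<le> card (face_boundary ` Pow F)"
  proof -
    have "card F + (card V - 1) = card E + 1" using euler card_V by linarith
    then have "card (face_boundary ` Pow F) * 2 * 2 ^ (card V - 1) = 2 ^ (card E + 1)"
      by (simp add: card_face_boundaries power_add[symmetric])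
    also have "\<dots> = card (even_subgraphs E) * 2 * 2 ^ (card V - 1)"
      using card_cycle_space by simp
    finally show ?thesis by simp
  qed
  ultimately show ?thesis by (metis card_seteq)
qed

section \<open>Dual 2-factors\<close>

lemma even_card_cycle_Int_two_factor:
  assumes D: "dual_two_factor E F bd D" and X: "X \<in> even_subgraphs E"
  shows "even (card (X \<inter> D))"
proof -
  obtain S where S: "S \<subseteq> F" "X = face_boundary S"
    using X cycle_space_eq_face_boundaries by blast
  have "finite S" using finite_subset[OF S(1) finite_F] .
  then have "even (card (face_boundary S \<inter> D))" using S(1)
  proof (induction S rule: finite_induct)
    case (insert f S)
    have "face_boundary (insert f S) = symdiff (face_boundary S) (face_boundary {f})"
      by (rule face_boundary_insert) (use insert in auto)
    moreover have fin: "finite (face_boundary S)" "finite (face_boundary {f})"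
      using finite_subset[OF mod2_boundary_subset finite_E] by blast+
    moreover have "face_boundary {f} \<inter> D = {e\<in>D. e \<subseteq> bd f}"
      using D unfolding face_boundary_singleton dual_two_factor_def by blast
    then have "card (face_boundary {f} \<inter> D) = 2"
      using D insert.prems unfolding dual_two_factor_def by simp
    ultimately show ?case using insert odd_card_symdiff_Int[OF fin, of D] by simp
  qed simp
  then show ?thesis using S(2) by simp
qed

(* Pu and Pw act as paths from r to u and to w, so Pu + uw + Pw is a cycle. *)
lemma parity_change_along_edge:
  assumes D: "dual_two_factor E F bd D" and uw: "{u, w} \<in> E"
    and Pu: "Pu \<subseteq> E" "vertex_boundary Pu = symdiff {r} {u}"
    and Pw: "Pw \<subseteq> E" "vertex_boundary Pw = symdiff {r} {w}"
  shows "odd (card (Pu \<inter> D)) \<noteq> odd (card (Pw \<inter> D)) \<longleftrightarrow> {u, w} \<in> D"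
proof -
  have "u \<noteq> w" using card_edge[OF uw] by (cases "u = w") auto
  let ?Y = "symdiff Pu {{u, w}}"
  have Y: "?Y \<subseteq> E" using Pu(1) uw by (simp add: symdiff_subset)
  have "vertex_boundary (symdiff ?Y Pw) = symdiff (symdiff (symdiff {r} {u}) {u, w}) (symdiff {r} {w})"
    using vertex_boundary_symdiff[OF Y Pw(1)] vertex_boundary_symdiff[OF Pu(1), of "{{u, w}}"]
      Pu(2) Pw(2) uw vertex_boundary_edge by simp
  also have "\<dots> = {}" using \<open>u \<noteq> w\<close> by (auto simp: mem_symdiff)
  finally have "symdiff ?Y Pw \<in> even_subgraphs E"
    unfolding cycle_space_eq_kernel using symdiff_subset[OF Y Pw(1)] by simp
  then have "even (card (symdiff ?Y Pw \<inter> D))" by (rule even_card_cycle_Int_two_factor[OF D])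
  moreover have fin: "finite Pu" "finite Pw" "finite ?Y"
    using Pu(1) Pw(1) Y finite_subset finite_E by blast+
  moreover have "odd (card ({{u, w}} \<inter> D)) \<longleftrightarrow> {u, w} \<in> D" by (cases "{u, w} \<in> D") auto
  ultimately show ?thesis
    using odd_card_symdiff_Int[OF fin(3,2), of D] odd_card_symdiff_Int[OF fin(1), of "{{u, w}}" D]
    by simp blast
qed

(* c v is the parity of the number of D-edges on a path from a root r to v. *)
theorem two_factor_cut_colouring:
  assumes D: "dual_two_factor E F bd D"
  obtains c :: "'a \<Rightarrow> bool" where "\<And>u w. {u, w} \<in> E \<Longrightarrow> c u \<noteq> c w \<longleftrightarrow> {u, w} \<in> D"
proof -
  obtain r where r: "r \<in> V" using card_V by fastforce
  have "\<forall>v\<in>V. \<exists>X. X \<subseteq> E \<and> vertex_boundary X = symdiff {r} {v}"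
    using vertex_boundary_path[OF r] by blast
  then obtain P where P: "\<And>v. v \<in> V \<Longrightarrow> P v \<subseteq> E \<and> vertex_boundary (P v) = symdiff {r} {v}"
    by metis
  have "odd (card (P u \<inter> D)) \<noteq> odd (card (P w \<inter> D)) \<longleftrightarrow> {u, w} \<in> D" if uw: "{u, w} \<in> E" for u w
  proof -
    have "u \<in> V" "w \<in> V" using edge_subset[OF uw] by auto
    then show ?thesis using parity_change_along_edge[OF D uw] P by blast
  qed
  then show thesis by (rule that)
qed

(* The dual-closed sets of faces are the unions of cycles of the dual 2-factor D. *)
definition dual_closed :: "'a set set \<Rightarrow> 'f set \<Rightarrow> bool" where
  "dual_closed D Q \<longleftrightarrow> (\<forall>(f, g) \<in> dual_adj F bd D. f \<in> Q \<longrightarrow> g \<in> Q)"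

lemma dual_closed_Diff: "dual_closed D Q \<Longrightarrow> dual_closed D (F - Q)"
  unfolding dual_closed_def dual_adj_def by blast

lemma dual_closed_Int: "dual_closed D Q \<Longrightarrow> dual_closed D Q' \<Longrightarrow> dual_closed D (Q \<inter> Q')"
  unfolding dual_closed_def by blast

lemma cycle_avoiding_two_factor:
  assumes "D \<subseteq> E" "X \<in> even_subgraphs E" "X \<inter> D = {}"
  obtains S where "S \<subseteq> F" "dual_closed D S" "X = face_boundary S"
proof -
  obtain S where S: "S \<subseteq> F" "X = face_boundary S"
    using assms(2) cycle_space_eq_face_boundaries by blast
  have "dual_closed D S" unfolding dual_closed_def
  proof (intro ballI impI, clarify)
    fix f g assume "(f, g) \<in> dual_adj F bd D" "f \<in> S"
    then obtain e where e: "e \<in> D" "e \<subseteq> bd f" "e \<subseteq> bd g" "g \<in> F"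
      unfolding dual_adj_def by blast
    then have "e \<in> E" "e \<notin> face_boundary S" using assms(1,3) S(2) by blast+
    then show "g \<in> S" using face_set_closed_across_edge[OF S(1)] e \<open>f \<in> S\<close> by blast
  qed
  then show thesis using S that by blast
qed

lemma no_three_disjoint_dual_closed:
  assumes "num_dual_cycles F bd D \<le> 2"
    and "A \<subseteq> F" "B \<subseteq> F" "C \<subseteq> F" "dual_closed D A" "dual_closed D B" "dual_closed D C"
    and "A \<inter> B = {}" "A \<inter> C = {}" "B \<inter> C = {}"
  shows "A = {} \<or> B = {} \<or> C = {}"
proof (rule ccontr)
  assume "\<not> ?thesis"
  then obtain a b c where abc: "a \<in> A" "b \<in> B" "c \<in> C" by blast
  let ?R = "(dual_adj F bd D)\<^sup>* \<inter> (F \<times> F)"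
  have class_subset: "?R `` {f} \<subseteq> Q" if "dual_closed D Q" "f \<in> Q" for Q f
  proof
    fix g assume "g \<in> ?R `` {f}"
    then have "(f, g) \<in> (dual_adj F bd D)\<^sup>*" by blast
    then show "g \<in> Q"
      by (induction rule: rtrancl_induct) (use that in \<open>auto simp: dual_closed_def\<close>)
  qed
  have "?R `` {a} \<subseteq> A" "?R `` {b} \<subseteq> B" "?R `` {c} \<subseteq> C"
    using class_subset[OF assms(5) abc(1)] class_subset[OF assms(6) abc(2)]
      class_subset[OF assms(7) abc(3)] by simp_all
  moreover have "a \<in> ?R `` {a}" "b \<in> ?R `` {b}" "c \<in> ?R `` {c}"
    using abc assms(2-4) by auto
  ultimately have "?R `` {a} \<noteq> ?R `` {b}" "?R `` {a} \<noteq> ?R `` {c}" "?R `` {b} \<noteq> ?R `` {c}"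
    using assms(8-10) by blast+
  then have "card {?R `` {a}, ?R `` {b}, ?R `` {c}} = 3" by simp
  moreover have "{?R `` {a}, ?R `` {b}, ?R `` {c}} \<subseteq> F // ?R"
    using abc assms(2-4) by (auto intro: quotientI)
  moreover have "finite (F // ?R)" by (rule finite_quotient[OF finite_F]) blast
  ultimately have "3 \<le> num_dual_cycles F bd D"
    unfolding num_dual_cycles_def by (metis card_mono)
  then show False using assms(1) by simp
qed

lemma dual_closed_dichotomy:
  assumes nc: "num_dual_cycles F bd D \<le> 2"
    and S: "S \<subseteq> F" "dual_closed D S" "S \<noteq> {}" "S \<noteq> F"
    and S': "S' \<subseteq> F" "dual_closed D S'" "S' \<noteq> {}" "S' \<noteq> F"
  shows "S' = S \<or> S' = F - S"
proof -
  define P1 P2 P3 P4 where "P1 = S \<inter> S'" and "P2 = S \<inter> (F - S')"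
    and "P3 = (F - S) \<inter> S'" and "P4 = (F - S) \<inter> (F - S')"
  have closed: "dual_closed D P1" "dual_closed D P2" "dual_closed D P3" "dual_closed D P4"
    unfolding P1_def P2_def P3_def P4_def using S(2) S'(2) dual_closed_Int dual_closed_Diff by blast+
  have sub: "P1 \<subseteq> F" "P2 \<subseteq> F" "P3 \<subseteq> F" "P4 \<subseteq> F"
    unfolding P1_def P2_def P3_def P4_def using S(1) by auto
  have disj: "P1 \<inter> P2 = {}" "P1 \<inter> P3 = {}" "P1 \<inter> P4 = {}" "P2 \<inter> P3 = {}" "P2 \<inter> P4 = {}" "P3 \<inter> P4 = {}"
    unfolding P1_def P2_def P3_def P4_def by auto
  have "P1 = {} \<or> P2 = {} \<or> P3 = {}" "P1 = {} \<or> P2 = {} \<or> P4 = {}"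
    "P1 = {} \<or> P3 = {} \<or> P4 = {}" "P2 = {} \<or> P3 = {} \<or> P4 = {}"
    using no_three_disjoint_dual_closed[OF nc sub(1,2,3) closed(1,2,3) disj(1,2,4)]
      no_three_disjoint_dual_closed[OF nc sub(1,2,4) closed(1,2,4) disj(1,3,5)]
      no_three_disjoint_dual_closed[OF nc sub(1,3,4) closed(1,3,4) disj(2,3,6)]
      no_three_disjoint_dual_closed[OF nc sub(2,3,4) closed(2,3,4) disj(4,5,6)] .
  moreover have "P1 \<noteq> {} \<or> P2 \<noteq> {}" "P3 \<noteq> {} \<or> P4 \<noteq> {}" "P1 \<noteq> {} \<or> P3 \<noteq> {}" "P2 \<noteq> {} \<or> P4 \<noteq> {}"
    unfolding P1_def P2_def P3_def P4_def using S S' by blast+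
  ultimately have "(P2 = {} \<and> P3 = {}) \<or> (P1 = {} \<and> P4 = {})" by blast
  then show ?thesis unfolding P1_def P2_def P3_def P4_def using S(1) S'(1) by blast
qed

theorem card_even_subgraphs_le_2:
  assumes D: "dual_two_factor E F bd D" and nc: "num_dual_cycles F bd D \<le> 2" and N: "N \<subseteq> E - D"
  shows "card (even_subgraphs N) \<le> 2"
proof -
  have "D \<subseteq> E" using D unfolding dual_two_factor_def by simp
  have boundary: "\<exists>S. S \<subseteq> F \<and> dual_closed D S \<and> S \<noteq> {} \<and> S \<noteq> F \<and> X = face_boundary S"
    if X: "X \<in> even_subgraphs N" "X \<noteq> {}" for X
  proof -
    have "X \<in> even_subgraphs E" "X \<inter> D = {}"
      using X(1) even_subgraphs_mono[of N E] N unfolding even_subgraphs_def by auto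
    then obtain S where S: "S \<subseteq> F" "dual_closed D S" "X = face_boundary S"
      using cycle_avoiding_two_factor[OF \<open>D \<subseteq> E\<close>] by blast
    then have "S \<noteq> {}" "S \<noteq> F" using X(2) face_boundary_faces by auto
    then show ?thesis using S by blast
  qed
  have unique: "X' = X"
    if X: "X \<in> even_subgraphs N" "X \<noteq> {}" and X': "X' \<in> even_subgraphs N" "X' \<noteq> {}" for X X'
  proof -
    obtain S where S: "S \<subseteq> F" "dual_closed D S" "S \<noteq> {}" "S \<noteq> F" "X = face_boundary S"
      using boundary[OF X] by blast
    obtain S' where S': "S' \<subseteq> F" "dual_closed D S'" "S' \<noteq> {}" "S' \<noteq> F" "X' = face_boundary S'"
      using boundary[OF X'] by blast
    have "S' = S \<or> S' = F - S" using dual_closed_dichotomy[OF nc S(1-4) S'(1-4)] .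
    then show ?thesis
    proof
      assume "S' = F - S"
      then show ?thesis using S(5) S'(5) face_boundary_complement[OF S(1)] by simp
    qed (use S(5) S'(5) in simp)
  qed
  show ?thesis
  proof (cases "even_subgraphs N \<subseteq> {{}}")
    case True
    then have "card (even_subgraphs N) \<le> card {{}}" using card_mono[of "{{}}" "even_subgraphs N"] by simp
    then show ?thesis by simp
  next
    case False
    then obtain X where "X \<in> even_subgraphs N" "X \<noteq> {}" by blast
    then have "even_subgraphs N \<subseteq> {{}, X}" using unique by blast
    then have "card (even_subgraphs N) \<le> card {{}, X}" using card_mono[of "{{}, X}" "even_subgraphs N"] by simp
    also have "\<dots> \<le> 2" by (simp add: card_insert_le_m1)
    finally show ?thesis .
  qed
qed

end

section \<open>Robust colouring\<close>

lemma one_selection_if_covering_selection: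
  assumes "covering_selection N f" "N \<subseteq> E"
  shows "one_selection V E f"
  unfolding one_selection_def
proof
  fix v
  have "f v = None \<or> (\<exists>e\<in>N. f v = Some e \<and> v \<in> e)"
    using assms(1) unfolding covering_selection_def by blast
  then show "f v = None \<or> (\<exists>e. f v = Some e \<and> e \<in> E \<and> v \<in> e)" using assms(2) by auto
qed

lemma selected_removed_disjoint:
  assumes "covering_selection N f" "\<forall>e\<in>N. e \<subseteq> V"
  shows "selected_removed V E f \<inter> N = {}"
proof -
  have "\<exists>v\<in>V. f v = Some e" if e: "e \<in> N" for e
  proof -
    obtain v where "f v = Some e" using assms(1) e unfolding covering_selection_def by blast
    moreover have "f v = None \<or> (\<exists>e'\<in>N. f v = Some e' \<and> v \<in> e')"
      using assms(1) unfolding covering_selection_def by blast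
    ultimately have "v \<in> e" by auto
    then show ?thesis using \<open>f v = Some e\<close> assms(2) e by auto
  qed
  then show ?thesis unfolding selected_removed_def by blast
qed

lemma simple_graph_edge_subset: "simple_graph V E \<Longrightarrow> e \<in> E \<Longrightarrow> e \<subseteq> V"
  unfolding simple_graph_def by force

lemma robust_chromatic_number_le:
  assumes "one_selection V E f" "colorable V (selected_removed V E f) k"
  shows "robust_chromatic_number V E \<le> k"
proof -
  have "chromatic_number V (selected_removed V E f) \<le> k"
    unfolding chromatic_number_def by (rule Least_le) (rule assms(2))
  moreover have "robust_chromatic_number V E \<le> chromatic_number V (selected_removed V E f)"
    unfolding robust_chromatic_number_def by (rule Least_le) (use assms(1) in blast)
  ultimately show ?thesis by linarith
qed

theorem corollary3p6:
  fixes VG VT :: "'a set" and EG ET :: "'a set set"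
    and F :: "'f set" and bd :: "'f \<Rightarrow> 'a set" and D :: "'a set set"
  assumes "plane_triangulation VT ET F bd"
    and "subgraph VG EG VT ET"
    and "dual_two_factor ET F bd D"
    and "num_dual_cycles F bd D \<le> 2"
  shows "robust_chromatic_number VG EG \<le> 2"
proof -
  interpret triangulation VT ET F bd by (rule triangulation.intro) (rule assms(1))
  have "EG \<subseteq> ET" "\<forall>e\<in>EG. e \<subseteq> VG"
    using assms(2) simple_graph_edge_subset unfolding subgraph_def by auto
  have "D \<subseteq> ET" using assms(3) by (simp add: dual_two_factor_def)
  obtain c :: "'a \<Rightarrow> bool" where c: "\<And>u w. {u, w} \<in> ET \<Longrightarrow> c u \<noteq> c w \<longleftrightarrow> {u, w} \<in> D"
    using two_factor_cut_colouring[OF assms(3)] by blast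
  let ?N = "EG - D"
  have "finite ?N" using finite_subset[OF _ finite_E] \<open>EG \<subseteq> ET\<close> by blast
  moreover have "\<forall>e\<in>?N. card e = 2" using card_edge \<open>EG \<subseteq> ET\<close> by blast
  moreover have "card (even_subgraphs ?N) \<le> 2"
    by (rule card_even_subgraphs_le_2[OF assms(3,4)]) (use \<open>EG \<subseteq> ET\<close> in blast)
  ultimately obtain f where f: "covering_selection ?N f" using covering_selection_exists by blast
  have "selected_removed VG EG f \<inter> ?N = {}"
    by (rule selected_removed_disjoint[OF f]) (use \<open>\<forall>e\<in>EG. e \<subseteq> VG\<close> in blast)
  then have "selected_removed VG EG f \<subseteq> D" unfolding selected_removed_def by blast
  then have "colorable VG (selected_removed VG EG f) 2"
    unfolding colorable_def using c \<open>D \<subseteq> ET\<close>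
    by (intro exI[of _ "\<lambda>v. if c v then 1 else 0"]) auto
  with one_selection_if_covering_selection[OF f] show ?thesis
    by (rule robust_chromatic_number_le) blast
qed

end
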